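(* Let $m\ge 9$ be an integer and $g=\lceil\log_2 m\rceil$. For each integer $k$ with $m/g\le k\le m$, let $b_k$ be the number of integer sequences $0=x_0<x_1<\dots<x_k\le x_{k+1}=m$ such that $\max_{1\le i\le k+1}(x_i-x_{i-1})\le g$. Then for every real number $z\ge 2$, $$\Big(1-\big(\tfrac{2}{z+1}\big)^{g}\Big)(z+1)^m\le\sum_{k=\lceil m/g\rceil}^{m} b_k z^k\le (z+1)^m.$$ *)

theory Defs
  imports Complex_Main
begin

definition gval :: "nat \<Rightarrow> nat" where
  "gval m = nat \<lceil>log 2 (real m)\<rceil>"

definition seqs :: "nat \<Rightarrow> nat \<Rightarrow> nat \<Rightarrow> nat list set" where
  "seqs m g k = {xs. length xs = k + 2 \<and> xs ! 0 = 0 \<and> xs ! (k + 1) = m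
      \<and> (\<forall>i<k. xs ! i < xs ! (i + 1)) \<and> xs ! k \<le> xs ! (k + 1)
      \<and> (\<forall>i\<le>k. xs ! (i + 1) - xs ! i \<le> g)}"

definition bcount :: "nat \<Rightarrow> nat \<Rightarrow> nat" where
  "bcount m k = card (seqs m (gval m) k)"

end

theory Submission
  imports Defs "HOL-Library.FuncSet"
begin

text \<open>
  The interior points \<open>x\<^sub>1 < \<dots> < x\<^sub>k\<close> of an admissible sequence form a \<open>k\<close>-subset of
  \<open>{1..m}\<close>, so \<open>b\<^sub>k \<le> (m choose k)\<close>; a \<open>k\<close>-subset gives an inadmissible sequence only if it
  misses one of the \<open>m - g + 1\<close> blocks of \<open>g\<close> consecutive integers, so
  \<open>b\<^sub>k \<ge> (m choose k) - (m - g + 1) ((m - g) choose k)\<close>. By the binomial theorem,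
  \<open>(z+1)\<^sup>m - (m-g+1) (z+1)\<^bsup>m-g\<^esup> \<le> \<Sum>\<^sub>k b\<^sub>k z\<^sup>k \<le> (z+1)\<^sup>m\<close>.
  Below \<open>\<lceil>m/g\<rceil>\<close> only the index \<open>j = \<lceil>m/g\<rceil> - 1\<close> contributes, and there every \<open>x\<^sub>i\<close> is
  confined to a window of \<open>g\<close> values, so \<open>b\<^sub>j \<le> g\<^sup>j\<close>; for \<open>m \<ge> 9\<close> this term is at most
  \<open>(g-1) (z+1)\<^bsup>m-g\<^esup>\<close>. Together with \<open>m \<le> 2\<^sup>g\<close> this yields the lower bound.
\<close>

definition gaps_le :: "nat \<Rightarrow> nat list \<Rightarrow> bool" where
  "gaps_le g xs \<longleftrightarrow> (\<forall>i. Suc i < length xs \<longrightarrow> xs ! Suc i - xs ! i \<le> g)"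

definition frame_list :: "nat \<Rightarrow> nat set \<Rightarrow> nat list" where
  "frame_list m S = 0 # sorted_list_of_set S @ [m]"

lemma sorted_nth_gap_disjoint:
  assumes "sorted xs" "Suc i < length xs"
  shows "set xs \<inter> {xs ! i <..< xs ! Suc i} = {}"
proof -
  have "x \<le> xs ! i \<or> xs ! Suc i \<le> x" if "x \<in> set xs" for x
  proof -
    obtain t where t: "t < length xs" "x = xs ! t" using \<open>x \<in> set xs\<close> by (metis in_set_conv_nth)
    show ?thesis using assms t by (cases "t \<le> i") (simp_all add: sorted_nth_mono)
  qed
  then show ?thesis by fastforce
qed

lemma gaps_le_nth_le:
  assumes "gaps_le g xs" "i \<le> j" "j < length xs"
  shows "xs ! j \<le> xs ! i + (j - i) * g"
  using assms(2,3)
proof (induction j rule: dec_induct)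
  case base then show ?case by simp
next
  case (step j)
  have "xs ! Suc j - xs ! j \<le> g" using assms(1) step.prems by (simp add: gaps_le_def)
  then show ?case using step by (simp add: Suc_diff_le)
qed

lemma in_seqs_iff:
  "xs \<in> seqs m g k \<longleftrightarrow>
     (\<exists>ys. xs = 0 # ys @ [m] \<and> length ys = k \<and> sorted_wrt (<) (0 # ys) \<and> set ys \<subseteq> {..m}
        \<and> gaps_le g xs)"
proof
  assume xs: "xs \<in> seqs m g k"
  define ys where "ys = butlast (tl xs)"
  have len: "length xs = k + 2" "xs ! 0 = 0" "xs ! (k + 1) = m" using xs by (auto simp: seqs_def)
  then have split: "xs = 0 # ys @ [m]" unfolding ys_def
    by (cases xs; cases "tl xs" rule: rev_cases) (auto simp: nth_append)
  show "\<exists>ys. xs = 0 # ys @ [m] \<and> length ys = k \<and> sorted_wrt (<) (0 # ys) \<and> set ys \<subseteq> {..m}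
        \<and> gaps_le g xs"
  proof (intro exI conjI)
    show "xs = 0 # ys @ [m]" by (fact split)
    show "length ys = k" using len(1) by (simp add: ys_def)
    have prefix: "(0 # ys) ! i = xs ! i" if "i \<le> k" for i
      using that split \<open>length ys = k\<close> by (simp add: nth_append flip: append_Cons)
    show sw: "sorted_wrt (<) (0 # ys)"
      unfolding sorted_wrt_iff_nth_Suc_transp[OF transp_on_less]
    proof (intro allI impI)
      fix i assume "Suc i < length (0 # ys)"
      then have "i < k" using \<open>length ys = k\<close> by simp
      then show "(0 # ys) ! i < (0 # ys) ! Suc i"
        using xs prefix[of i] prefix[of "Suc i"] by (simp add: seqs_def)
    qed
    show "set ys \<subseteq> {..m}"
    proof
      fix y assume "y \<in> set ys"
      then obtain t where "t < k" "y = (0 # ys) ! Suc t" using \<open>length ys = k\<close> by (auto simp: in_set_conv_nth)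
      then have "y \<le> (0 # ys) ! k" using sw \<open>length ys = k\<close>
        by (metis Suc_leI le_eq_less_or_eq length_Cons lessI sorted_wrt_nth_less)
      then show "y \<in> {..m}" using xs prefix by (auto simp: seqs_def)
    qed
    show "gaps_le g xs" using xs by (auto simp: seqs_def gaps_le_def)
  qed
next
  assume "\<exists>ys. xs = 0 # ys @ [m] \<and> length ys = k \<and> sorted_wrt (<) (0 # ys) \<and> set ys \<subseteq> {..m}
        \<and> gaps_le g xs"
  then obtain ys where xs: "xs = 0 # ys @ [m]" and ys: "length ys = k" "sorted_wrt (<) (0 # ys)"
    "set ys \<subseteq> {..m}" "gaps_le g xs" by blast
  have prefix: "xs ! i = (0 # ys) ! i" if "i \<le> k" for i
    using that xs ys by (simp add: nth_append flip: append_Cons)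
  have "xs ! i < xs ! Suc i" if "i < k" for i
    using that prefix ys sorted_wrt_nth_less[OF ys(2), of i "Suc i"] by simp
  moreover have "xs ! k \<le> m" using prefix[of k] ys by (cases k) (auto simp: subset_iff)
  ultimately show "xs \<in> seqs m g k" using xs ys by (auto simp: seqs_def gaps_le_def nth_append)
qed

lemma frame_list_in_seqs_iff:
  assumes "S \<subseteq> {1..m}" "card S = k"
  shows "frame_list m S \<in> seqs m g k \<longleftrightarrow> gaps_le g (frame_list m S)"
proof -
  have "finite S" using assms(1) finite_subset by blast
  then have "length (sorted_list_of_set S) = k" "sorted_wrt (<) (0 # sorted_list_of_set S)"
    "set (sorted_list_of_set S) \<subseteq> {..m}"
    using assms by auto
  then show ?thesis unfolding in_seqs_iff frame_list_def by blast
qed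

lemma seqs_eq_frame_list_image:
  "seqs m g k = frame_list m ` {S. S \<subseteq> {1..m} \<and> card S = k \<and> gaps_le g (frame_list m S)}"
proof
  show "seqs m g k \<subseteq> frame_list m ` {S. S \<subseteq> {1..m} \<and> card S = k \<and> gaps_le g (frame_list m S)}"
  proof
    fix xs assume "xs \<in> seqs m g k"
    then obtain ys where xs: "xs = 0 # ys @ [m]" and ys: "length ys = k" "sorted_wrt (<) (0 # ys)"
      "set ys \<subseteq> {..m}" "gaps_le g xs" unfolding in_seqs_iff by blast
    have "sorted_list_of_set (set ys) = ys"
      using ys(2) by (simp add: sorted_list_of_set.idem_if_sorted_distinct strict_sorted_iff)
    then have "xs = frame_list m (set ys)" by (simp add: xs frame_list_def)
    moreover have "set ys \<subseteq> {1..m}" "card (set ys) = k"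
      using ys by (auto simp: strict_sorted_iff distinct_card Suc_le_eq subset_iff)
    ultimately show "xs \<in> frame_list m ` {S. S \<subseteq> {1..m} \<and> card S = k \<and> gaps_le g (frame_list m S)}"
      using ys(4) by blast
  qed
  show "frame_list m ` {S. S \<subseteq> {1..m} \<and> card S = k \<and> gaps_le g (frame_list m S)} \<subseteq> seqs m g k"
    using frame_list_in_seqs_iff by blast
qed

lemma inj_on_frame_list: "inj_on (frame_list m) {S. finite S}"
  by (rule inj_onI) (auto simp: frame_list_def dest: sorted_list_of_set_inject)

lemma card_seqs_eq:
  "card (seqs m g k) = card {S. S \<subseteq> {1..m} \<and> card S = k \<and> gaps_le g (frame_list m S)}"
  unfolding seqs_eq_frame_list_image
  by (rule card_image, rule inj_on_subset[OF inj_on_frame_list]) (auto intro: finite_subset)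

lemma card_seqs_le_choose: "card (seqs m g k) \<le> m choose k"
proof -
  have "card (seqs m g k) \<le> card {S. S \<subseteq> {1..m} \<and> card S = k}"
    unfolding card_seqs_eq by (rule card_mono) auto
  then show ?thesis by (simp add: n_subsets)
qed

lemma frame_list_gap_block:
  assumes "S \<subseteq> {1..m}" "\<not> gaps_le g (frame_list m S)"
  shows "\<exists>j \<le> m - g. S \<inter> {j+1..j+g} = {}"
proof -
  let ?L = "frame_list m S"
  have "finite S" using assms(1) finite_subset by blast
  then have set_L: "set ?L = insert 0 (insert m S)" and sorted_L: "sorted ?L"
    using assms(1) by (auto simp: frame_list_def sorted_append)
  obtain i where i: "Suc i < length ?L" "g < ?L ! Suc i - ?L ! i"
    using assms(2) by (auto simp: gaps_le_def not_le)
  have "?L ! Suc i \<le> m" using set_L assms(1) i(1) nth_mem by fastforce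
  moreover have "S \<inter> {?L ! i + 1 .. ?L ! i + g} = {}"
    using sorted_nth_gap_disjoint[OF sorted_L i(1)] set_L i(2) by fastforce
  ultimately show ?thesis using i(2) by (intro exI[of _ "?L ! i"]) auto
qed

lemma card_seqs_ge_choose:
  assumes "g \<le> m"
  shows "m choose k \<le> card (seqs m g k) + (m - g + 1) * ((m - g) choose k)"
proof -
  define good where "good = {S. S \<subseteq> {1..m} \<and> card S = k \<and> gaps_le g (frame_list m S)}"
  define avoiding where "avoiding j = {S. S \<subseteq> {1..m} - {j+1..j+g} \<and> card S = k}" for j
  have "{S. S \<subseteq> {1..m} \<and> card S = k} \<subseteq> good \<union> (\<Union>j\<le>m-g. avoiding j)"
  proof
    fix S assume S: "S \<in> {S. S \<subseteq> {1..m} \<and> card S = k}"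
    show "S \<in> good \<union> (\<Union>j\<le>m-g. avoiding j)"
    proof (cases "gaps_le g (frame_list m S)")
      case True then show ?thesis using S by (simp add: good_def)
    next
      case False
      then obtain j where "j \<le> m - g" "S \<inter> {j+1..j+g} = {}"
        using frame_list_gap_block S by blast
      then show ?thesis using S by (auto simp: avoiding_def)
    qed
  qed
  moreover have "finite (good \<union> (\<Union>j\<le>m-g. avoiding j))"
    by (auto simp: good_def avoiding_def)
  ultimately have "card {S. S \<subseteq> {1..m} \<and> card S = k} \<le> card (good \<union> (\<Union>j\<le>m-g. avoiding j))"
    by (rule card_mono[rotated])
  then have "m choose k \<le> card (good \<union> (\<Union>j\<le>m-g. avoiding j))"
    by (simp add: n_subsets)
  also have "\<dots> \<le> card good + (\<Sum>j\<le>m-g. card (avoiding j))"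
    by (intro order.trans[OF card_Un_le] add_left_mono card_UN_le) simp
  also have "(\<Sum>j\<le>m-g. card (avoiding j)) = (m - g + 1) * ((m - g) choose k)"
  proof -
    have "card (avoiding j) = (m - g) choose k" if "j \<le> m - g" for j
    proof -
      have "card ({1..m} - {j+1..j+g}) = m - g"
        using that assms by (subst card_Diff_subset) auto
      then show ?thesis using n_subsets[of "{1..m} - {j+1..j+g}" k] by (simp add: avoiding_def)
    qed
    then show ?thesis by simp
  qed
  finally show ?thesis by (simp add: card_seqs_eq good_def)
qed

lemma seqs_nth_bounds:
  assumes "xs \<in> seqs m g k" "i \<le> k + 1"
  shows "xs ! i \<le> i * g" "m \<le> xs ! i + (k + 1 - i) * g"
proof -
  have "gaps_le g xs" using assms(1) unfolding in_seqs_iff by blast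
  moreover have "length xs = k + 2" "xs ! 0 = 0" "xs ! (k + 1) = m"
    using assms(1) by (auto simp: seqs_def)
  ultimately
  show "xs ! i \<le> i * g" "m \<le> xs ! i + (k + 1 - i) * g"
    using gaps_le_nth_le[of g xs 0 i] gaps_le_nth_le[of g xs i "k + 1"] assms(2) by auto
qed

lemma seqs_eq_empty: "(k + 1) * g < m \<Longrightarrow> seqs m g k = {}"
proof -
  assume "(k + 1) * g < m"
  have False if "xs \<in> seqs m g k" for xs
    using seqs_nth_bounds(2)[OF that, of 0] that \<open>(k + 1) * g < m\<close> by (simp add: seqs_def)
  then show ?thesis by blast
qed

lemma card_seqs_le_power:
  assumes "k * g < m"
  shows "card (seqs m g k) \<le> g ^ k"
proof -
  define window where "window i = {i * g <.. Suc i * g}" for i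
  define interior where "interior xs = restrict (\<lambda>i. xs ! Suc i) {..<k}" for xs :: "nat list"
  have maps_to: "interior ` seqs m g k \<subseteq> (\<Pi>\<^sub>E i\<in>{..<k}. window i)"
  proof (rule image_subsetI)
    fix xs assume xs: "xs \<in> seqs m g k"
    have "xs ! Suc i \<in> window i" if "i < k" for i
    proof -
      have "(k - i) * g + i * g = k * g" using \<open>i < k\<close> by (simp flip: add_mult_distrib)
      then show ?thesis using seqs_nth_bounds[OF xs, of "Suc i"] \<open>i < k\<close> assms
        by (simp add: window_def)
    qed
    then show "interior xs \<in> (\<Pi>\<^sub>E i\<in>{..<k}. window i)" by (simp add: interior_def)
  qed
  have inj: "inj_on interior (seqs m g k)"
  proof (rule inj_onI)
    fix xs xs' assume "xs \<in> seqs m g k" "xs' \<in> seqs m g k" and eq: "interior xs = interior xs'"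
    then obtain ys ys' where xs: "xs = 0 # ys @ [m]" "xs' = 0 # ys' @ [m]" "length ys = k" "length ys' = k"
      unfolding in_seqs_iff by blast
    have "ys ! i = ys' ! i" if "i < k" for i
      using fun_cong[OF eq, of i] that xs by (simp add: interior_def nth_append)
    then have "ys = ys'" using xs by (simp add: list_eq_iff_nth_eq)
    then show "xs = xs'" using xs by simp
  qed
  have finite: "finite (\<Pi>\<^sub>E i\<in>{..<k}. window i)"
    by (rule finite_PiE) (simp_all add: window_def)
  have "card (seqs m g k) \<le> card (\<Pi>\<^sub>E i\<in>{..<k}. window i)"
    using card_inj_on_le[OF inj maps_to finite] .
  also have "\<dots> = g ^ k" by (simp add: card_PiE window_def)
  finally show ?thesis .
qed

lemma gval_bounds:
  assumes "2 \<le> m"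
  shows "2 ^ (gval m - 1) < m" "m \<le> 2 ^ gval m"
proof -
  have "1 \<le> log 2 (real m)" using assms by simp
  then have "1 \<le> gval m" unfolding gval_def by linarith
  moreover have "int (gval m) = \<lceil>log 2 (real m)\<rceil>"
    unfolding gval_def using \<open>1 \<le> log 2 (real m)\<close> by simp
  ultimately have "\<lceil>log (real 2) (real m)\<rceil> = int (gval m - 1) + 1" by simp
  then have "2 ^ (gval m - 1) < m \<and> m \<le> 2 ^ (gval m - 1 + 1)"
    using assms by (subst (asm) ceiling_log_nat_eq_powr_iff) auto
  then show "2 ^ (gval m - 1) < m" "m \<le> 2 ^ gval m" using \<open>1 \<le> gval m\<close> by simp_all
qed

lemma four_mul_le_two_power: "2 \<le> n \<Longrightarrow> 4 * n \<le> 2 ^ n + (4::nat)"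
proof (induction n rule: dec_induct)
  case (step n)
  have "(4::nat) \<le> 2 ^ n" using power_increasing[of 2 n "2::nat"] step.hyps by simp
  then show ?case using step.IH by simp
qed simp

lemma square_le_two_power: "4 \<le> n \<Longrightarrow> n\<^sup>2 \<le> (2::nat) ^ n"
proof (induction n rule: dec_induct)
  case (step n)
  have "4 * n \<le> n * n" by (rule mult_le_mono1[OF step.hyps(1)])
  then have "2 * n + 1 \<le> n * n" using step.hyps(1) by linarith
  then have "(Suc n)\<^sup>2 \<le> 2 * n\<^sup>2" by (simp add: power2_eq_square)
  then show ?case using step.IH by simp
qed simp

lemma ceiling_divide_nat_bounds:
  fixes m g :: nat
  assumes "0 < g" "0 < m"
  defines "c \<equiv> nat \<lceil>real m / real g\<rceil>"
  shows "1 \<le> c" "m \<le> c * g" "(c - 1) * g < m"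
proof -
  have "0 < real m / real g" using assms by simp
  then have c: "real c = of_int \<lceil>real m / real g\<rceil>" unfolding c_def by simp
  have "real m \<le> real c * real g" using ceiling_divide_upper[of "real g" "real m"] c assms by simp
  then show "m \<le> c * g" by (simp flip: of_nat_mult)
  then show "1 \<le> c" using assms(2) by (cases c) auto
  have "(real c - 1) * real g < real m" using ceiling_divide_lower[of "real g" "real m"] c assms by simp
  then have "real ((c - 1) * g) < real m" using \<open>1 \<le> c\<close> by simp
  then show "(c - 1) * g < m" by (simp only: of_nat_less_iff)
qed

lemma power_le_three_power:
  fixes g j m :: nat
  assumes "4 \<le> g" "j * g < m" "4 * g \<le> m + 7"
  shows "g + j \<le> m" "g ^ j \<le> 3 ^ (m - g - j + 1)"
proof -
  have "4 * j \<le> j * g" using assms(1) by simp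
  then show "g + j \<le> m" using assms by linarith
  define e where "e = m - g - j + 1"
  have "e + g + j = m + 1" unfolding e_def using \<open>g + j \<le> m\<close> by simp
  then have "j * g \<le> 3 * e" using \<open>4 * j \<le> j * g\<close> assms by linarith
  have "(g ^ j)\<^sup>2 = (g\<^sup>2) ^ j" by (simp flip: power_mult add: mult.commute)
  also have "\<dots> \<le> (2 ^ g) ^ j" by (intro power_mono square_le_two_power assms(1)) simp
  also have "\<dots> = 2 ^ (j * g)" by (simp flip: power_mult add: mult.commute)
  also have "\<dots> \<le> 2 ^ (3 * e)" using \<open>j * g \<le> 3 * e\<close> by (intro power_increasing) auto
  also have "\<dots> \<le> 9 ^ e" by (simp add: power_mult power_mono)
  also have "\<dots> = ((3::nat)\<^sup>2) ^ e" by simp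
  also have "\<dots> = (3 ^ e)\<^sup>2" by (simp only: mult.commute flip: power_mult)
  finally show "g ^ j \<le> 3 ^ (m - g - j + 1)" unfolding e_def by (rule power2_le_imp_le) simp
qed

lemma card_seqs_mul_power_le:
  fixes z :: real
  assumes "4 \<le> g" "j * g < m" "4 * g \<le> m + 7" "2 \<le> z"
  shows "real (card (seqs m g j)) * z ^ j \<le> real (g - 1) * (z + 1) ^ (m - g)"
proof -
  note gj = power_le_three_power[OF assms(1-3)]
  have "card (seqs m g j) \<le> 3 * 3 ^ (m - g - j)"
    using card_seqs_le_power[OF assms(2)] gj(2) by simp
  then have "real (card (seqs m g j)) \<le> real (3 * 3 ^ (m - g - j))"
    by (simp only: of_nat_le_iff)
  also have "\<dots> = 3 * 3 ^ (m - g - j)" by simp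
  also have "\<dots> \<le> real (g - 1) * (z + 1) ^ (m - g - j)"
    using assms(1,4) by (intro mult_mono power_mono) auto
  finally have "real (card (seqs m g j)) * z ^ j \<le> real (g - 1) * (z + 1) ^ (m - g - j) * (z + 1) ^ j"
    using assms(4) by (intro mult_mono power_mono) auto
  also have "\<dots> = real (g - 1) * (z + 1) ^ (m - g)"
    using gj(1) by (simp add: mult.assoc flip: power_add)
  finally show ?thesis .
qed

lemma binomial_sum_atMost:
  fixes z :: real
  assumes "n \<le> N"
  shows "(\<Sum>k\<le>N. real (n choose k) * z ^ k) = (z + 1) ^ n"
proof -
  have "(z + 1) ^ n = (\<Sum>k\<le>n. real (n choose k) * z ^ k)"
    using binomial_ring[of z 1 n] by simp
  also have "\<dots> = (\<Sum>k\<le>N. real (n choose k) * z ^ k)"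
    using assms by (intro sum.mono_neutral_left) auto
  finally show ?thesis by simp
qed

lemma sum_card_seqs_le:
  fixes z :: real
  assumes "0 \<le> z" "K \<subseteq> {..m}"
  shows "(\<Sum>k\<in>K. real (card (seqs m g k)) * z ^ k) \<le> (z + 1) ^ m"
proof -
  have "(\<Sum>k\<in>K. real (card (seqs m g k)) * z ^ k) \<le> (\<Sum>k\<in>K. real (m choose k) * z ^ k)"
    using assms(1) card_seqs_le_choose by (intro sum_mono mult_right_mono) auto
  also have "\<dots> \<le> (\<Sum>k\<le>m. real (m choose k) * z ^ k)"
    using assms by (intro sum_mono2) auto
  also have "\<dots> = (z + 1) ^ m" by (rule binomial_sum_atMost) simp
  finally show ?thesis .
qed

lemma sum_card_seqs_ge:
  fixes z :: real
  assumes "g \<le> m" "0 \<le> z"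
  shows "(z + 1) ^ m - real (m - g + 1) * (z + 1) ^ (m - g) \<le> (\<Sum>k\<le>m. real (card (seqs m g k)) * z ^ k)"
proof -
  have "(z + 1) ^ m - real (m - g + 1) * (z + 1) ^ (m - g)
      = (\<Sum>k\<le>m. (real (m choose k) - real (m - g + 1) * real ((m - g) choose k)) * z ^ k)"
    using binomial_sum_atMost[of m m z] binomial_sum_atMost[of "m - g" m z]
    by (simp add: left_diff_distrib sum_subtractf mult.assoc flip: sum_distrib_left)
  also have "\<dots> \<le> (\<Sum>k\<le>m. real (card (seqs m g k)) * z ^ k)"
  proof (intro sum_mono mult_right_mono)
    fix k
    have "m choose k \<le> card (seqs m g k) + (m - g + 1) * ((m - g) choose k)"
      by (rule card_seqs_ge_choose[OF assms(1)])
    then have "real (m choose k) \<le> real (card (seqs m g k) + (m - g + 1) * ((m - g) choose k))"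
      by (simp only: of_nat_le_iff)
    then show "real (m choose k) - real (m - g + 1) * real ((m - g) choose k) \<le> real (card (seqs m g k))"
      unfolding of_nat_add of_nat_mult by linarith
  qed (simp add: assms(2))
  finally show ?thesis .
qed

lemma sum_card_seqs_atLeast_Suc:
  fixes z :: real
  assumes "j * g < m" "j \<le> m"
  shows "(\<Sum>k=Suc j..m. real (card (seqs m g k)) * z ^ k)
           = (\<Sum>k\<le>m. real (card (seqs m g k)) * z ^ k) - real (card (seqs m g j)) * z ^ j"
proof -
  have "seqs m g k = {}" if "k < j" for k
  proof (rule seqs_eq_empty)
    show "(k + 1) * g < m" using assms(1) that mult_le_mono1[of "k + 1" j g] by linarith
  qed
  then have "(\<Sum>k\<le>m. real (card (seqs m g k)) * z ^ k) = (\<Sum>k=j..m. real (card (seqs m g k)) * z ^ k)"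
    by (intro sum.mono_neutral_right) auto
  also have "\<dots> = real (card (seqs m g j)) * z ^ j + (\<Sum>k=Suc j..m. real (card (seqs m g k)) * z ^ k)"
    using assms(2) by (intro sum.atLeast_Suc_atMost)
  finally show ?thesis by simp
qed

lemma sum_card_seqs_from_ceiling_ge:
  fixes z :: real
  assumes "4 \<le> g" "2 ^ (g - 1) < m" "m \<le> 2 ^ g" "2 \<le> z"
  shows "(1 - (2 / (z + 1)) ^ g) * (z + 1) ^ m
           \<le> (\<Sum>k = nat \<lceil>real m / real g\<rceil>..m. real (card (seqs m g k)) * z ^ k)"
proof -
  define b where "b k = real (card (seqs m g k)) * z ^ k" for k
  define j where "j = nat \<lceil>real m / real g\<rceil> - 1"
  have c: "nat \<lceil>real m / real g\<rceil> = Suc j" and "j * g < m"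
    using ceiling_divide_nat_bounds[of g m] assms(1,2) unfolding j_def by auto
  have "4 * (g - 1) \<le> 2 ^ (g - 1) + 4" using assms(1) by (intro four_mul_le_two_power) simp
  then have "4 * g \<le> m + 7" using assms(1,2) by linarith
  note gj = power_le_three_power[OF assms(1) \<open>j * g < m\<close> this]
  have "0 \<le> z" using assms(4) by simp
  have "(z + 1) ^ m = (z + 1) ^ g * (z + 1) ^ (m - g)"
    using gj(1) by (simp flip: power_add)
  then have "(1 - (2 / (z + 1)) ^ g) * (z + 1) ^ m = (z + 1) ^ m - 2 ^ g * (z + 1) ^ (m - g)"
    using \<open>0 \<le> z\<close> by (simp add: algebra_simps power_divide)
  also have "\<dots> \<le> (z + 1) ^ m - real m * (z + 1) ^ (m - g)"
    using assms(3) \<open>0 \<le> z\<close> by (intro diff_left_mono mult_right_mono) (simp_all flip: of_nat_le_iff)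
  also have "\<dots> = (z + 1) ^ m - real (m - g + 1) * (z + 1) ^ (m - g) - real (g - 1) * (z + 1) ^ (m - g)"
    using gj(1) assms(1) by (simp add: algebra_simps)
  also have "\<dots> \<le> (\<Sum>k\<le>m. b k) - b j"
    using sum_card_seqs_ge[of g m z] card_seqs_mul_power_le[OF assms(1) \<open>j * g < m\<close> \<open>4 * g \<le> m + 7\<close> assms(4)]
      gj(1) \<open>0 \<le> z\<close> unfolding b_def by linarith
  also have "\<dots> = (\<Sum>k=Suc j..m. b k)"
    unfolding b_def using sum_card_seqs_atLeast_Suc[OF \<open>j * g < m\<close>] gj(1) by simp
  finally show ?thesis unfolding c b_def .
qed

theorem mainTheorem13:
  fixes m :: nat and z :: real
  assumes "m \<ge> 9" and "z \<ge> 2"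
  shows "(1 - (2 / (z + 1)) ^ gval m) * (z + 1) ^ m
           \<le> (\<Sum>k = nat \<lceil>real m / real (gval m)\<rceil>..m. real (bcount m k) * z ^ k)
       \<and> (\<Sum>k = nat \<lceil>real m / real (gval m)\<rceil>..m. real (bcount m k) * z ^ k)
           \<le> (z + 1) ^ m"
proof
  have g: "2 ^ (gval m - 1) < m" "m \<le> 2 ^ gval m" using gval_bounds assms(1) by auto
  have "(2::nat) ^ 3 < 2 ^ gval m" using g(2) assms(1) by simp
  then have "4 \<le> gval m" by (subst (asm) power_strict_increasing_iff) auto
  from sum_card_seqs_from_ceiling_ge[OF this g assms(2)]
  show "(1 - (2 / (z + 1)) ^ gval m) * (z + 1) ^ m
           \<le> (\<Sum>k = nat \<lceil>real m / real (gval m)\<rceil>..m. real (bcount m k) * z ^ k)"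
    unfolding bcount_def .
  show "(\<Sum>k = nat \<lceil>real m / real (gval m)\<rceil>..m. real (bcount m k) * z ^ k) \<le> (z + 1) ^ m"
    unfolding bcount_def using assms(2) by (intro sum_card_seqs_le) auto
qed

end
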